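(* Let $b\ge2$ and let $S$ be a nonempty subset of $\mathbb{Z}$. Then all $b$-orderings $\mathbf{a}$ of $S$ give the same values $\alpha_k(S,b,\mathbf{a})$ for each $k$, and, writing $\alpha_k(S,b)$ for this common value, $$\alpha_k(S,b)=\alpha_k(\varphi_b(S))\quad\text{for all } k\ge1,$$ where $\alpha_k(\varphi_b(S))$ is the $t$-exponent sequence of the set $\varphi_b(S)\subseteq\mathbb{Q}[[t]]$.
   Context: For $b\ge2$ and $a\in\mathbb{Z}$, $\operatorname{ord}_b(a)$ is the largest $k\in\mathbb{N}$ with $b^k\mid a$ ($+\infty$ for $a=0$). A $b$-ordering of $S$ is a sequence $\mathbf{a}=(a_i)_{i\ge0}$ in $S$ such that for each $i\ge1$, $a_i$ attains $\min_{a'\in S}\sum_{j=0}^{i-1}\operatorname{ord}_b(a'-a_j)$; $\alpha_k(S,b,\mathbf{a}):=\sum_{j=0}^{k-1}\operatorname{ord}_b(a_k-a_j)$. The map $\varphi_b:\mathbb{Z}\to\mathbb{Q}[[t]]$ is $\varphi_b(a)=\sum_{k\ge0}d_k t^k$ where $d_k=\lfloor a/b^k\rfloor-b\lfloor a/b^{k+1}\rfloor$ are the base-$b$ digits of $a$. For $f\in\mathbb{Q}[[t]]$, $\operatorname{ord}_t(f)$ is the largest $\alpha$ with $t^\alpha\mid f$ ($+\infty$ for $f=0$). For nonempty $U\subseteq\mathbb{Q}[[t]]$, a $t$-ordering of $U$ is a sequence $(f_i)_{i\ge0}$ in $U$ with each $f_k$ ($k\ge1$) minimizing $\sum_{j=0}^{k-1}\operatorname{ord}_t(f_k-f_j)$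 over $U$; the $t$-exponent sequence $\alpha_k(U):=\sum_{j=0}^{k-1}\operatorname{ord}_t(f_k-f_j)$ for any $t$-ordering (independent of the choice). *)

theory Defs
  imports "HOL-Computational_Algebra.Formal_Power_Series" "HOL-Library.Extended_Nat"
begin

definition ord_b :: "int \<Rightarrow> int \<Rightarrow> enat" where
  "ord_b b a = (if a = 0 then \<infinity> else enat (GREATEST k. b ^ k dvd a))"

definition is_b_ordering :: "int set \<Rightarrow> int \<Rightarrow> (nat \<Rightarrow> int) \<Rightarrow> bool" where
  "is_b_ordering S b a \<longleftrightarrow>
     (\<forall>i. a i \<in> S) \<and>
     (\<forall>i\<ge>1. \<forall>a'\<in>S. (\<Sum>j<i. ord_b b (a i - a j)) \<le> (\<Sum>j<i. ord_b b (a' - a j)))"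

definition alpha_b :: "int \<Rightarrow> (nat \<Rightarrow> int) \<Rightarrow> nat \<Rightarrow> enat" where
  "alpha_b b a k = (\<Sum>j<k. ord_b b (a k - a j))"

text \<open>The digit map phi_b into Q[[t]] (floor-based digits, so negative integers
  have infinitely many digits b-1).\<close>
definition phi_b :: "int \<Rightarrow> int \<Rightarrow> rat fps" where
  "phi_b b a = Abs_fps (\<lambda>k. of_int (a div b ^ k - b * (a div b ^ (Suc k))))"

definition ord_t :: "rat fps \<Rightarrow> enat" where
  "ord_t f = (if f = 0 then \<infinity> else enat (GREATEST k. fps_X ^ k dvd f))"

definition is_t_ordering :: "rat fps set \<Rightarrow> (nat \<Rightarrow> rat fps) \<Rightarrow> bool" where
  "is_t_ordering U f \<longleftrightarrow>
     (\<forall>i. f i \<in> U) \<and>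
     (\<forall>k\<ge>1. \<forall>g\<in>U. (\<Sum>j<k. ord_t (f k - f j)) \<le> (\<Sum>j<k. ord_t (g - f j)))"

definition alpha_t_seq :: "(nat \<Rightarrow> rat fps) \<Rightarrow> nat \<Rightarrow> enat" where
  "alpha_t_seq f k = (\<Sum>j<k. ord_t (f k - f j))"

text \<open>t-exponent sequence of U, computed from some t-ordering (independent of choice).\<close>
definition t_exponent :: "rat fps set \<Rightarrow> nat \<Rightarrow> enat" where
  "t_exponent U k = alpha_t_seq (SOME f. is_t_ordering U f) k"

end

theory Submission
  imports Defs
begin

(*
  The digit map is an isometry: b ^ n divides x - y exactly when the n lowest
  base-b digits of x and y agree, so ord_t (phi_b x - phi_b y) = ord_b (x - y).
  Since phi_b is injective, the b-orderings of S are exactly the preimages of the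
  t-orderings of phi_b(S), with the same exponent sequences.

  For every n-element
  X \<subseteq> S, twice alpha_0 + ... + alpha_(n-1) is at most the sum of
  ord_b (x - y) over ordered pairs of distinct points of X, with equality for
  X = {a_0, ..., a_(n-1)}; so these partial sums are a minimum over n-subsets of S.
  The inequality needs a point x of X whose ord_b-sum to a_0, ..., a_(n-1) is at
  most its ord_b-sum to the rest of X: take a residue class mod b holding more
  points of X than of the a_j, and recurse after z \<mapsto> z div b, which shrinks
  the diameter.
*)

lemma enat_eqI_lower_bounds:
  fixes u v :: enat
  assumes "\<And>n. enat n \<le> u \<longleftrightarrow> enat n \<le> v"
  shows "u = v"
proof (cases u; cases v)
  fix m m'
  assume "u = enat m" "v = enat m'"
  then show ?thesis
    using assms[of m] assms[of m'] by simp
next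
  fix m
  assume "u = enat m" "v = \<infinity>"
  then show ?thesis
    using assms[of "Suc m"] by simp
next
  fix m
  assume "u = \<infinity>" "v = enat m"
  then show ?thesis
    using assms[of "Suc m"] by simp
qed simp

lemma sum_enat_eq_infinity_iff:
  fixes f :: "'a \<Rightarrow> enat"
  shows "finite A \<Longrightarrow> sum f A = \<infinity> \<longleftrightarrow> (\<exists>x\<in>A. f x = \<infinity>)"
  by (induction A rule: finite_induct) (simp_all add: plus_eq_infty_iff_enat)

lemma enat_double_cancel: "2 * x = 2 * (y :: enat) \<Longrightarrow> x = y"
  by (cases x; cases y) (simp_all add: numeral_eq_enat)

lemma sum_eSuc: "finite A \<Longrightarrow> (\<Sum>x\<in>A. eSuc (f x)) = sum f A + of_nat (card A)"
  by (simp add: eSuc_plus_1 sum.distrib)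

lemma ord_b_0 [simp]: "ord_b b 0 = \<infinity>"
  by (simp add: ord_b_def)

lemma ord_b_eq_infinity_iff [simp]: "ord_b b d = \<infinity> \<longleftrightarrow> d = 0"
  by (simp add: ord_b_def)

lemma ord_b_diff_commute: "ord_b b (x - y) = ord_b b (y - x)"
  by (simp add: ord_b_def dvd_diff_commute)

lemma ord_b_eq_multiplicity:
  fixes b d :: int
  assumes "\<not> is_unit b" "d \<noteq> 0"
  shows "ord_b b d = enat (multiplicity b d)"
  using assms by (auto simp: ord_b_def power_dvd_iff_le_multiplicity intro!: Greatest_equality)

lemma enat_le_ord_b_iff:
  fixes b d :: int
  assumes "\<not> is_unit b"
  shows "enat n \<le> ord_b b d \<longleftrightarrow> b ^ n dvd d"
  using assms by (cases "d = 0") (simp_all add: ord_b_eq_multiplicity power_dvd_iff_le_multiplicity)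

lemma ord_b_eq_0_iff:
  fixes b d :: int
  assumes "\<not> is_unit b"
  shows "ord_b b d = 0 \<longleftrightarrow> \<not> b dvd d"
  using enat_le_ord_b_iff[OF assms, of 1 d] by (cases "ord_b b d") (auto simp: zero_enat_def)

lemma ord_b_mult_self:
  fixes b d :: int
  assumes "\<not> is_unit b" "b \<noteq> 0"
  shows "ord_b b (b * d) = eSuc (ord_b b d)"
  using assms by (cases "d = 0") (simp_all add: ord_b_eq_multiplicity multiplicity_times_same eSuc_enat)

lemma enat_le_ord_t_iff: "enat n \<le> ord_t f \<longleftrightarrow> (\<forall>k<n. fps_nth f k = 0)"
proof (cases "f = 0")
  case False
  have "(GREATEST k. fps_X ^ k dvd f) = subdegree f"
    using False by (intro Greatest_equality) (simp_all add: fps_dvd_iff)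
  then show ?thesis
    using False by (auto simp: ord_t_def intro: subdegree_geI nth_less_subdegree_zero)
qed (simp add: ord_t_def)

lemma diff_eq_mult_div_diff_if_mod_eq:
  fixes x y b :: int
  assumes "x mod b = y mod b"
  shows "x - y = b * (x div b - y div b)"
proof -
  have "b * (x div b - y div b) = (x - x mod b) - (y - y mod b)"
    by (simp only: right_diff_distrib minus_mod_eq_mult_div)
  with assms show ?thesis
    by simp
qed

lemma inj_on_div_if_mod_eq:
  fixes b r :: int
  assumes "\<forall>y\<in>Y. y mod b = r"
  shows "inj_on (\<lambda>z. z div b) Y"
proof (rule inj_onI)
  fix x y
  assume "x \<in> Y" "y \<in> Y" "x div b = y div b"
  then show "x = y"
    using assms diff_eq_mult_div_diff_if_mod_eq[of x b y] by simp
qed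

lemma exists_fibre_card_less:
  assumes "finite X" "finite J" "card J < card X"
  shows "\<exists>r. card {j\<in>J. g j = r} < card {x\<in>X. f x = r}"
proof (rule ccontr)
  let ?R = "f ` X \<union> g ` J"
  assume "\<not> ?thesis"
  then have "(\<Sum>r\<in>?R. card {x\<in>X. f x = r}) \<le> (\<Sum>r\<in>?R. card {j\<in>J. g j = r})"
    by (intro sum_mono) (simp add: not_less)
  moreover have "(\<Sum>r\<in>?R. card {x\<in>X. f x = r}) = card X"
    using sum.group[of X ?R f "\<lambda>_. 1 :: nat"] assms by simp
  moreover have "(\<Sum>r\<in>?R. card {j\<in>J. g j = r}) = card J"
    using sum.group[of J ?R g "\<lambda>_. 1 :: nat"] assms by simp
  ultimately show False
    using assms(3) by simp
qed

definition ord_pair_sum :: "int \<Rightarrow> int set \<Rightarrow> enat" where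
  "ord_pair_sum b X = (\<Sum>x\<in>X. \<Sum>y\<in>X - {x}. ord_b b (x - y))"

lemma ord_pair_sum_insert:
  assumes "finite X" "x \<notin> X"
  shows "ord_pair_sum b (insert x X) = ord_pair_sum b X + 2 * (\<Sum>y\<in>X. ord_b b (x - y))"
proof -
  have "(\<Sum>y\<in>insert x X - {z}. ord_b b (z - y))
      = ord_b b (x - z) + (\<Sum>y\<in>X - {z}. ord_b b (z - y))"
    if "z \<in> X" for z
  proof -
    have "insert x X - {z} = insert x (X - {z})"
      using assms(2) that by auto
    then show ?thesis
      using assms by (simp add: ord_b_diff_commute)
  qed
  then show ?thesis
    using assms by (simp add: ord_pair_sum_def sum.distrib mult_2 add_ac insert_Diff_if)
qed

lemma ord_pair_sum_image_prefix:
  "inj_on a {..<n} \<Longrightarrow> ord_pair_sum b (a ` {..<n}) = 2 * (\<Sum>k<n. alpha_b b a k)"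
proof (induction n)
  case (Suc n)
  then have "inj_on a {..<n}" "a n \<notin> a ` {..<n}"
    by (simp_all add: lessThan_Suc)
  then have "ord_pair_sum b (a ` {..<Suc n}) = ord_pair_sum b (a ` {..<n}) + 2 * alpha_b b a n"
    by (simp add: lessThan_Suc ord_pair_sum_insert alpha_b_def sum.reindex)
  then show ?case
    using Suc.IH \<open>inj_on a {..<n}\<close> by (simp add: distrib_left)
qed (simp add: ord_pair_sum_def)

lemma b_ordering_mem: "is_b_ordering S b a \<Longrightarrow> a i \<in> S"
  by (simp add: is_b_ordering_def)

lemma alpha_b_le_if_b_ordering:
  assumes "is_b_ordering S b a" "y \<in> S"
  shows "alpha_b b a k \<le> (\<Sum>j<k. ord_b b (y - a j))"
  using assms by (cases "k = 0") (auto simp: is_b_ordering_def alpha_b_def simp del: sum.lessThan_Suc)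

lemma b_ordering_notin_prefix:
  assumes "is_b_ordering S b a" "\<not> S \<subseteq> a ` {..<k}"
  shows "a k \<notin> a ` {..<k}"
proof
  assume "a k \<in> a ` {..<k}"
  then have "alpha_b b a k = \<infinity>"
    by (auto simp: alpha_b_def sum_enat_eq_infinity_iff)
  moreover obtain y where "y \<in> S" "y \<notin> a ` {..<k}"
    using assms(2) by blast
  then have "(\<Sum>j<k. ord_b b (y - a j)) \<noteq> \<infinity>"
    by (auto simp: sum_enat_eq_infinity_iff)
  ultimately show False
    using alpha_b_le_if_b_ordering[OF assms(1) \<open>y \<in> S\<close>, of k] by simp
qed

lemma b_ordering_inj_on:
  assumes "is_b_ordering S b a" "\<not> S \<subseteq> a ` {..<k}"
  shows "inj_on a {..<Suc k}"
proof -
  have "inj_on a {..<Suc m}" if "m \<le> k" for m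
    using that
  proof (induction m)
    case (Suc m)
    have "\<not> S \<subseteq> a ` {..<Suc m}"
      using assms(2) Suc.prems by (meson image_mono lessThan_subset_iff order_trans)
    then show ?case
      using Suc b_ordering_notin_prefix[OF assms(1)] by (simp add: lessThan_Suc[of "Suc m"])
  qed (simp add: lessThan_Suc)
  then show ?thesis
    by simp
qed

lemma b_ordering_prefix_covers_iff:
  assumes "is_b_ordering S b a"
  shows "S \<subseteq> a ` {..<k} \<longleftrightarrow> finite S \<and> card S \<le> k"
proof
  assume "S \<subseteq> a ` {..<k}"
  then show "finite S \<and> card S \<le> k"
    by (metis card_image_le card_lessThan card_mono finite_imageI finite_lessThan finite_subset order_trans)
next
  assume S: "finite S \<and> card S \<le> k"
  show "S \<subseteq> a ` {..<k}"
  proof (rule ccontr)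
    assume "\<not> S \<subseteq> a ` {..<k}"
    then have "card (a ` {..<Suc k}) = Suc k"
      using b_ordering_inj_on[OF assms] by (simp add: card_image)
    moreover have "a ` {..<Suc k} \<subseteq> S"
      using b_ordering_mem[OF assms] by blast
    ultimately show False
      using S card_mono[of S "a ` {..<Suc k}"] by simp
  qed
qed

lemma alpha_b_eq_infinity_iff:
  assumes "is_b_ordering S b a"
  shows "alpha_b b a k = \<infinity> \<longleftrightarrow> finite S \<and> card S \<le> k"
proof -
  have "alpha_b b a k = \<infinity> \<longleftrightarrow> a k \<in> a ` {..<k}"
    by (auto simp: alpha_b_def sum_enat_eq_infinity_iff)
  also have "\<dots> \<longleftrightarrow> S \<subseteq> a ` {..<k}"
    using b_ordering_notin_prefix[OF assms] b_ordering_mem[OF assms] by blast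
  finally show ?thesis
    using b_ordering_prefix_covers_iff[OF assms] by simp
qed

context
  fixes b :: int
  assumes b_ge_2: "b \<ge> 2"
begin

lemma b_not_unit: "\<not> is_unit b"
  using b_ge_2 by simp

lemma fps_nth_phi_b: "fps_nth (phi_b b x) k = of_int (x div b ^ k mod b)"
proof -
  have "x div b ^ Suc k = x div b ^ k div b"
    using b_ge_2 zdiv_zmult2_eq[of b x "b ^ k"] by (simp add: mult.commute)
  then have "x div b ^ k - b * (x div b ^ Suc k) = x div b ^ k mod b"
    by (simp add: minus_mult_div_eq_mod)
  then show ?thesis
    by (simp only: phi_b_def fps_nth_Abs_fps)
qed

lemma power_Suc_dvd_diff_iff:
  "b ^ Suc n dvd x - y \<longleftrightarrow> b ^ n dvd x - y \<and> x div b ^ n mod b = y div b ^ n mod b"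
proof -
  have split: "z mod b ^ Suc n = b ^ n * (z div b ^ n mod b) + z mod b ^ n" for z
    using b_ge_2 zmod_zmult2_eq[of b z "b ^ n"] by (simp add: mult.commute)
  have low: "z mod b ^ Suc n mod b ^ n = z mod b ^ n" for z
    by (simp add: mod_mod_cancel)
  have "b ^ Suc n dvd x - y \<longleftrightarrow> x mod b ^ Suc n = y mod b ^ Suc n"
    by (rule mod_eq_dvd_iff[symmetric])
  also have "\<dots> \<longleftrightarrow> x mod b ^ n = y mod b ^ n \<and> x div b ^ n mod b = y div b ^ n mod b"
  proof
    assume eq: "x mod b ^ Suc n = y mod b ^ Suc n"
    then have rem: "x mod b ^ n = y mod b ^ n"
      using low by metis
    moreover have "x div b ^ n mod b = y div b ^ n mod b"
      using eq b_ge_2 unfolding split rem by simp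
    ultimately show "x mod b ^ n = y mod b ^ n \<and> x div b ^ n mod b = y div b ^ n mod b" ..
  qed (simp only: split)
  also have "\<dots> \<longleftrightarrow> b ^ n dvd x - y \<and> x div b ^ n mod b = y div b ^ n mod b"
    by (simp only: mod_eq_dvd_iff)
  finally show ?thesis .
qed

lemma power_dvd_diff_iff_digits_eq:
  "b ^ n dvd x - y \<longleftrightarrow> (\<forall>k<n. x div b ^ k mod b = y div b ^ k mod b)"
  by (induction n) (auto simp: power_Suc_dvd_diff_iff less_Suc_eq simp del: power_Suc)

lemma ord_t_phi_b_diff: "ord_t (phi_b b x - phi_b b y) = ord_b b (x - y)"
  by (rule enat_eqI_lower_bounds)
    (simp add: enat_le_ord_t_iff enat_le_ord_b_iff[OF b_not_unit] power_dvd_diff_iff_digits_eq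
      fps_nth_phi_b)

lemma ord_b_diff_eq_0_if_mod_ne: "x mod b \<noteq> y mod b \<Longrightarrow> ord_b b (x - y) = 0"
  by (simp add: ord_b_eq_0_iff[OF b_not_unit] mod_eq_dvd_iff)

lemma ord_b_diff_eq_eSuc_if_mod_eq:
  "x mod b = y mod b \<Longrightarrow> ord_b b (x - y) = eSuc (ord_b b (x div b - y div b))"
  using b_ge_2 by (simp add: diff_eq_mult_div_diff_if_mod_eq ord_b_mult_self[OF b_not_unit])

lemma ord_sum_eq_residue_class_sum:
  assumes "finite J"
  shows "(\<Sum>j\<in>J. ord_b b (x - A j))
    = (\<Sum>j\<in>{j\<in>J. A j mod b = x mod b}. eSuc (ord_b b (x div b - A j div b)))"
proof -
  have "(\<Sum>j\<in>J. ord_b b (x - A j)) = (\<Sum>j\<in>{j\<in>J. A j mod b = x mod b}. ord_b b (x - A j))"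
    using assms by (intro sum.mono_neutral_right) (auto intro: ord_b_diff_eq_0_if_mod_ne)
  also have "\<dots> = (\<Sum>j\<in>{j\<in>J. A j mod b = x mod b}. eSuc (ord_b b (x div b - A j div b)))"
    by (intro sum.cong) (simp_all add: ord_b_diff_eq_eSuc_if_mod_eq)
  finally show ?thesis .
qed

lemma abs_div_diff_le_if_mod_eq:
  assumes "x mod b = y mod b" "\<bar>x - y\<bar> \<le> int d" "d \<noteq> 0"
  shows "\<bar>x div b - y div b\<bar> \<le> int (d - 1)"
proof -
  define q where "q = \<bar>x div b - y div b\<bar>"
  have "2 * q \<le> b * q"
    using b_ge_2 by (simp add: q_def mult_right_mono)
  also have "\<dots> = \<bar>x - y\<bar>"
    using b_ge_2 diff_eq_mult_div_diff_if_mod_eq[OF assms(1)] by (simp add: q_def abs_mult)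
  also have "\<dots> \<le> int d"
    by (rule assms(2))
  finally show ?thesis
    using assms(3) unfolding q_def[symmetric] by linarith
qed

lemma ord_sum_within_residue_class:
  assumes "finite Y" "x \<in> Y" "\<forall>y\<in>Y. y mod b = x mod b"
  shows "(\<Sum>y\<in>Y - {x}. ord_b b (x - y))
    = (\<Sum>y\<in>(\<lambda>z. z div b) ` Y - {x div b}. ord_b b (x div b - y)) + of_nat (card Y - 1)"
proof -
  have inj: "inj_on (\<lambda>z. z div b) Y"
    using assms(3) by (rule inj_on_div_if_mod_eq)
  have "(\<Sum>y\<in>Y - {x}. ord_b b (x - y)) = (\<Sum>y\<in>Y - {x}. eSuc (ord_b b (x div b - y div b)))"
    using assms(3) by (intro sum.cong) (simp_all add: ord_b_diff_eq_eSuc_if_mod_eq)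
  also have "\<dots> = (\<Sum>y\<in>(\<lambda>z. z div b) ` (Y - {x}). eSuc (ord_b b (x div b - y)))"
    using inj by (simp add: sum.reindex inj_on_diff)
  also have "\<dots> = (\<Sum>y\<in>(\<lambda>z. z div b) ` Y - {x div b}. ord_b b (x div b - y)) + of_nat (card Y - 1)"
    using assms(1,2) inj by (simp add: inj_on_image_set_diff sum_eSuc card_image card_Diff_singleton)
  finally show ?thesis .
qed

lemma exists_ord_sum_le_within_bounded:
  fixes X :: "int set" and J :: "'a set" and A :: "'a \<Rightarrow> int"
  assumes "finite X" "finite J" "card J < card X" "\<forall>x\<in>X. \<forall>y\<in>X. \<bar>x - y\<bar> \<le> int d"
  shows "\<exists>x\<in>X. (\<Sum>j\<in>J. ord_b b (x - A j)) \<le> (\<Sum>y\<in>X - {x}. ord_b b (x - y))"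
  using assms
proof (induction d arbitrary: X J A rule: less_induct)
  case (less d)
  obtain x0 where "x0 \<in> X"
    using less.prems(3) by fastforce
  show ?case
  proof (cases "d = 0")
    case True
    then have "X = {x0}"
      using less.prems(4) \<open>x0 \<in> X\<close> by force
    then have "J = {}"
      using less.prems(2,3) by simp
    then show ?thesis
      using \<open>x0 \<in> X\<close> by auto
  next
    case False
    obtain r where r: "card {j\<in>J. A j mod b = r} < card {x\<in>X. x mod b = r}"
      using exists_fibre_card_less[OF less.prems(1-3),
          where g = "\<lambda>j. A j mod b" and f = "\<lambda>x. x mod b"]
      by blast
    define Xr where "Xr = {x\<in>X. x mod b = r}"
    define Jr where "Jr = {j\<in>J. A j mod b = r}"
    let ?q = "\<lambda>z::int. z div b"
    have inj: "inj_on ?q Xr"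
      by (rule inj_on_div_if_mod_eq[where r = r]) (simp add: Xr_def)
    have "\<bar>y div b - z div b\<bar> \<le> int (d - 1)" if "y \<in> Xr" "z \<in> Xr" for y z
      using that less.prems(4) False by (intro abs_div_diff_le_if_mod_eq) (auto simp: Xr_def)
    then obtain x' where x': "x' \<in> ?q ` Xr" and
      ih: "(\<Sum>j\<in>Jr. ord_b b (x' - A j div b)) \<le> (\<Sum>y\<in>?q ` Xr - {x'}. ord_b b (x' - y))"
      using less.IH[of "d - 1" "?q ` Xr" Jr "\<lambda>j. A j div b"] False less.prems(1,2) r inj
      by (auto simp: Xr_def Jr_def card_image)
    then obtain x where x: "x \<in> Xr" "x' = x div b"
      by blast
    have "(\<Sum>j\<in>J. ord_b b (x - A j)) = (\<Sum>j\<in>Jr. eSuc (ord_b b (x' - A j div b)))"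
      using x by (simp add: ord_sum_eq_residue_class_sum[OF less.prems(2)] Xr_def Jr_def)
    also have "\<dots> = (\<Sum>j\<in>Jr. ord_b b (x' - A j div b)) + of_nat (card Jr)"
      using less.prems(2) by (simp add: sum_eSuc Jr_def)
    also have "\<dots> \<le> (\<Sum>y\<in>?q ` Xr - {x'}. ord_b b (x' - y)) + of_nat (card Xr - 1)"
      using ih r by (intro add_mono) (simp_all add: Xr_def Jr_def)
    also have "\<dots> = (\<Sum>y\<in>Xr - {x}. ord_b b (x - y))"
      using x less.prems(1) by (simp add: ord_sum_within_residue_class Xr_def)
    also have "\<dots> \<le> (\<Sum>y\<in>X - {x}. ord_b b (x - y))"
      using less.prems(1) by (intro sum_mono2) (auto simp: Xr_def)
    finally show ?thesis
      using x by (auto simp: Xr_def)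
  qed
qed

lemma exists_ord_sum_le_within:
  fixes X :: "int set" and J :: "'a set" and A :: "'a \<Rightarrow> int"
  assumes "finite X" "finite J" "card J < card X"
  shows "\<exists>x\<in>X. (\<Sum>j\<in>J. ord_b b (x - A j)) \<le> (\<Sum>y\<in>X - {x}. ord_b b (x - y))"
proof -
  define M where "M = Max (abs ` X)"
  have bound: "\<bar>x\<bar> \<le> M" if "x \<in> X" for x
    using assms(1) that by (simp add: M_def)
  have "\<bar>x - y\<bar> \<le> int (nat (2 * M))" if "x \<in> X" "y \<in> X" for x y
    using bound[OF that(1)] bound[OF that(2)] by linarith
  then show ?thesis
    by (intro exists_ord_sum_le_within_bounded[OF assms] ballI)
qed

lemma sum_alpha_b_le_ord_pair_sum:
  assumes a: "is_b_ordering S b a"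
  shows "X \<subseteq> S \<Longrightarrow> finite X \<Longrightarrow> 2 * (\<Sum>k<card X. alpha_b b a k) \<le> ord_pair_sum b X"
proof (induction "card X" arbitrary: X)
  case (Suc n)
  obtain x where x: "x \<in> X" and
    x_le: "(\<Sum>j<n. ord_b b (x - a j)) \<le> (\<Sum>y\<in>X - {x}. ord_b b (x - y))"
    using exists_ord_sum_le_within[OF Suc.prems(2), of "{..<n}" a] Suc.hyps(2) by auto
  have card: "n = card (X - {x})"
    using Suc.hyps(2) Suc.prems(2) x by simp
  have "alpha_b b a n \<le> (\<Sum>y\<in>X - {x}. ord_b b (x - y))"
    using alpha_b_le_if_b_ordering[OF a, of x n] x x_le Suc.prems(1) by auto
  moreover have "2 * (\<Sum>k<n. alpha_b b a k) \<le> ord_pair_sum b (X - {x})"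
    using Suc.hyps(1)[OF card] Suc.prems by (auto simp flip: card)
  moreover have "ord_pair_sum b X = ord_pair_sum b (X - {x}) + 2 * (\<Sum>y\<in>X - {x}. ord_b b (x - y))"
    using ord_pair_sum_insert[of "X - {x}" x b] Suc.prems(2) x by (simp add: insert_absorb)
  ultimately show ?case
    unfolding Suc.hyps(2)[symmetric] by (simp add: distrib_left add_mono mult_left_mono)
qed simp

lemma sum_alpha_b_eq:
  assumes a: "is_b_ordering S b a" and a': "is_b_ordering S b a'"
    and inj: "inj_on a {..<n}" "inj_on a' {..<n}"
  shows "(\<Sum>k<n. alpha_b b a k) = (\<Sum>k<n. alpha_b b a' k)"
proof (rule enat_double_cancel, rule antisym)
  have "2 * (\<Sum>k<n. alpha_b b a k) \<le> ord_pair_sum b (a' ` {..<n})"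
    using sum_alpha_b_le_ord_pair_sum[OF a, of "a' ` {..<n}"] b_ordering_mem[OF a'] inj(2)
    by (auto simp: card_image)
  then show "2 * (\<Sum>k<n. alpha_b b a k) \<le> 2 * (\<Sum>k<n. alpha_b b a' k)"
    by (simp add: ord_pair_sum_image_prefix[OF inj(2)])
  have "2 * (\<Sum>k<n. alpha_b b a' k) \<le> ord_pair_sum b (a ` {..<n})"
    using sum_alpha_b_le_ord_pair_sum[OF a', of "a ` {..<n}"] b_ordering_mem[OF a] inj(1)
    by (auto simp: card_image)
  then show "2 * (\<Sum>k<n. alpha_b b a' k) \<le> 2 * (\<Sum>k<n. alpha_b b a k)"
    by (simp add: ord_pair_sum_image_prefix[OF inj(1)])
qed

lemma alpha_b_eq_if_b_orderings:
  assumes a: "is_b_ordering S b a" and a': "is_b_ordering S b a'"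
  shows "alpha_b b a k = alpha_b b a' k"
proof (cases "finite S \<and> card S \<le> k")
  case True
  then have "alpha_b b a k = \<infinity>" "alpha_b b a' k = \<infinity>"
    using alpha_b_eq_infinity_iff[OF a] alpha_b_eq_infinity_iff[OF a'] by blast+
  then show ?thesis
    by simp
next
  case False
  then have inj: "inj_on a {..<Suc k}" "inj_on a' {..<Suc k}"
    using b_ordering_inj_on b_ordering_prefix_covers_iff a a' by blast+
  have fin: "(\<Sum>j<k. alpha_b b a' j) \<noteq> \<infinity>"
    using False alpha_b_eq_infinity_iff[OF a'] by (auto simp: sum_enat_eq_infinity_iff)
  have "(\<Sum>j<k. alpha_b b a j) = (\<Sum>j<k. alpha_b b a' j)"
    using inj by (intro sum_alpha_b_eq[OF a a']) (auto intro: inj_on_subset)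
  moreover have "(\<Sum>j<Suc k. alpha_b b a j) = (\<Sum>j<Suc k. alpha_b b a' j)"
    using inj by (rule sum_alpha_b_eq[OF a a'])
  ultimately have "(\<Sum>j<k. alpha_b b a' j) + alpha_b b a k = (\<Sum>j<k. alpha_b b a' j) + alpha_b b a' k"
    by simp
  with fin show ?thesis
    by (metis enat_add_left_cancel)
qed

lemma inj_phi_b: "inj (phi_b b)"
proof (rule injI)
  fix x y
  assume "phi_b b x = phi_b b y"
  then have "ord_b b (x - y) = \<infinity>"
    using ord_t_phi_b_diff[of x y] by (simp add: ord_t_def)
  then show "x = y"
    by simp
qed

lemma is_t_ordering_phi_b_comp_iff:
  "is_t_ordering (phi_b b ` S) (phi_b b \<circ> c) \<longleftrightarrow> is_b_ordering S b c"
  by (simp add: is_t_ordering_def is_b_ordering_def ord_t_phi_b_diff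
      inj_image_mem_iff[OF inj_phi_b])

lemma alpha_t_seq_phi_b_comp: "alpha_t_seq (phi_b b \<circ> c) = alpha_b b c"
  by (simp add: fun_eq_iff alpha_t_seq_def alpha_b_def ord_t_phi_b_diff)

end

theorem theorem5p3:
  fixes b :: int and S :: "int set"
  assumes "b \<ge> 2" and "S \<noteq> {}"
  shows "(\<forall>a a'. is_b_ordering S b a \<and> is_b_ordering S b a' \<longrightarrow>
            (\<forall>k. alpha_b b a k = alpha_b b a' k))
       \<and> (\<forall>a. is_b_ordering S b a \<longrightarrow>
            (\<forall>k\<ge>1. alpha_b b a k = t_exponent (phi_b b ` S) k))"
proof (intro conjI allI impI)
  fix a a' k
  assume "is_b_ordering S b a \<and> is_b_ordering S b a'"
  then show "alpha_b b a k = alpha_b b a' k"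
    using alpha_b_eq_if_b_orderings[OF assms(1)] by blast
next
  fix a and k :: nat
  assume a: "is_b_ordering S b a"
  let ?U = "phi_b b ` S"
  let ?f = "SOME f. is_t_ordering ?U f"
  have "is_t_ordering ?U (phi_b b \<circ> a)"
    using a is_t_ordering_phi_b_comp_iff[OF assms(1)] by blast
  then have f: "is_t_ordering ?U ?f"
    using someI[of "is_t_ordering ?U"] by blast
  define c where "c = inv (phi_b b) \<circ> ?f"
  have "?f i \<in> range (phi_b b)" for i
    using f unfolding is_t_ordering_def by blast
  then have f_eq: "?f = phi_b b \<circ> c"
    by (simp add: c_def fun_eq_iff f_inv_into_f)
  then have "is_b_ordering S b c"
    using f is_t_ordering_phi_b_comp_iff[OF assms(1)] by simp
  then show "alpha_b b a k = t_exponent ?U k"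
    using alpha_b_eq_if_b_orderings[OF assms(1) a] alpha_t_seq_phi_b_comp[OF assms(1)]
    by (simp add: t_exponent_def f_eq)
qed

end
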